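(* Let $d\ge2$, let $\Omega\subset\mathbb R^d$ be a nonempty bounded open convex polytope, and suppose $\mathfrak E=\{e_1,\dots,e_p\}\subset\mathbb R^d$ is weakly incoming to $\Omega$. Then there exist $r>0$ and $\epsilon\in]0,1]$ such that for every $x_0\in\overline\Omega$ there exist $q\in\{1,\dots,p\}$ and $\theta_q\in\{\pm1\}$ with $$x+t\theta_qe_q\in\Omega\qquad\text{for all }x\in B(x_0,r)\cap\Omega\text{ and all }t\in[0,\epsilon].$$
   Context: $\Omega=\{x\in\mathbb R^d:\ \ell_j(x)>b_j,\ j=1,\dots,m\}$ for linear forms $\ell_j$ and reals $b_j$. Define $\mathrm c:\mathbb R^d\to\mathbb N\cup\{+\infty\}$ by $\mathrm c(x)=0$ if $x\in\Omega$, $+\infty$ if $x\notin\overline\Omega$, $\#\{i:\ell_i(x)=b_i\}$ if $x\in\partial\Omega$. $\mathfrak E$ is weakly incoming to $\Omega$ if for every $x_0\in\partial\Omega$ there exist $\epsilon>0$, $\theta\in\{\pm1\}$, $e\in\mathfrak E$ with $\mathrm c(x_0+\theta te)<\mathrm c(x_0)$ for all $t\in]0,\epsilon]$. $B(x_0,r)$ is the open ball of radius $r$ about $x_0$. *)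

theory Defs
  imports "HOL-Analysis.Analysis" "HOL-Library.Extended_Nat"
begin

definition poly_set :: "(nat \<Rightarrow> 'a::euclidean_space \<Rightarrow> real) \<Rightarrow> (nat \<Rightarrow> real) \<Rightarrow> nat \<Rightarrow> 'a set" where
  "poly_set l b m = {x. \<forall>j\<in>{1..m}. b j < l j x}"

definition cnt :: "(nat \<Rightarrow> 'a::euclidean_space \<Rightarrow> real) \<Rightarrow> (nat \<Rightarrow> real) \<Rightarrow> nat \<Rightarrow> 'a \<Rightarrow> enat" where
  "cnt l b m x =
     (if x \<in> poly_set l b m then 0
      else if x \<notin> closure (poly_set l b m) then \<infinity>
      else enat (card {i\<in>{1..m}. l i x = b i}))"

definition weakly_incoming :: "'a set \<Rightarrow> (nat \<Rightarrow> 'a::euclidean_space \<Rightarrow> real) \<Rightarrow> (nat \<Rightarrow> real) \<Rightarrow> nat \<Rightarrow> bool" where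
  "weakly_incoming E l b m \<longleftrightarrow>
     (\<forall>x0\<in>frontier (poly_set l b m). \<exists>\<epsilon>>0. \<exists>\<theta>\<in>{-1, 1::real}. \<exists>e\<in>E.
        \<forall>t\<in>{0<..\<epsilon>}. cnt l b m (x0 + (\<theta> * t) *\<^sub>R e) < cnt l b m x0)"

end

theory Submission
  imports Defs
begin

text \<open>
  If the counting function drops along \<open>\<theta> e\<close> from a boundary point \<open>y\<close>, the points
  \<open>y + t \<theta> e\<close> stay in the closed polytope, so \<open>\<theta> e\<close> points weakly inward for every
  constraint active at \<open>y\<close>. Near \<open>y\<close>, the constraints that \<open>\<theta> e\<close> strictly decreases
  are inactive and keep a positive slack, while the others can only grow along \<open>\<theta> e\<close>; so a
  single step \<open>\<delta>\<close> works for all points of \<open>\<Omega>\<close> near \<open>y\<close>. A Lebesgue number of the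
  resulting cover of the compact closure of \<open>\<Omega>\<close> makes radius and step uniform.
\<close>

definition weakly_inward ::
    "(nat \<Rightarrow> 'a::euclidean_space \<Rightarrow> real) \<Rightarrow> (nat \<Rightarrow> real) \<Rightarrow> nat \<Rightarrow> 'a \<Rightarrow> 'a \<Rightarrow> bool" where
  "weakly_inward l b m y v \<longleftrightarrow> (\<forall>i\<in>{1..m}. l i y = b i \<longrightarrow> 0 \<le> l i v)"

lemma open_halfspaces_Inter:
  fixes l :: "nat \<Rightarrow> 'a::euclidean_space \<Rightarrow> real"
  assumes "finite J" and "\<forall>j\<in>J. linear (l j)"
  shows "open {x. \<forall>j\<in>J. b j < l j x}"
proof -
  have "{x. \<forall>j\<in>J. b j < l j x} = (\<Inter>j\<in>J. {x. b j < l j x})" by auto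
  moreover have "continuous_on UNIV (l j)" if "j \<in> J" for j
    using assms(2) that by (simp add: linear_continuous_on linear_conv_bounded_linear)
  ultimately show ?thesis
    using assms(1) by (auto intro!: open_INT open_Collect_less continuous_on_const)
qed

lemma open_poly_set:
  assumes "\<forall>j\<in>{1..m}. linear (l j)"
  shows "open (poly_set l b m)"
  unfolding poly_set_def using open_halfspaces_Inter[OF finite_atLeastAtMost assms] .

lemma closure_poly_set_subset:
  assumes "\<forall>j\<in>{1..m}. linear (l j)"
  shows "closure (poly_set l b m) \<subseteq> {x. \<forall>j\<in>{1..m}. b j \<le> l j x}"
proof (rule closure_minimal)
  have "continuous_on UNIV (l j)" if "j \<in> {1..m}" for j
    using assms that by (simp add: linear_continuous_on linear_conv_bounded_linear)
  then have "closed (\<Inter>j\<in>{1..m}. {x. b j \<le> l j x})"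
    by (auto intro!: closed_INT closed_Collect_le continuous_on_const)
  moreover have "{x. \<forall>j\<in>{1..m}. b j \<le> l j x} = (\<Inter>j\<in>{1..m}. {x. b j \<le> l j x})"
    by auto
  ultimately show "closed {x. \<forall>j\<in>{1..m}. b j \<le> l j x}"
    by simp
qed (auto simp: poly_set_def less_imp_le)

lemma weakly_inward_poly_set:
  "y \<in> poly_set l b m \<Longrightarrow> weakly_inward l b m y v"
  by (auto simp: poly_set_def weakly_inward_def)

lemma frontier_weakly_incoming_direction:
  assumes lin: "\<forall>j\<in>{1..m}. linear (l j)"
    and wi: "weakly_incoming E l b m" and y: "y \<in> frontier (poly_set l b m)"
  shows "\<exists>v\<in>E. \<exists>\<theta>\<in>{-1, 1::real}. weakly_inward l b m y (\<theta> *\<^sub>R v)"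
proof -
  obtain \<epsilon> \<theta> v where \<epsilon>: "\<epsilon> > 0" and \<theta>: "\<theta> \<in> {-1, 1::real}" and v: "v \<in> E"
    and drop: "\<forall>t\<in>{0<..\<epsilon>}. cnt l b m (y + (\<theta> * t) *\<^sub>R v) < cnt l b m y"
    using wi y unfolding weakly_incoming_def by blast
  have "cnt l b m (y + (\<theta> * \<epsilon>) *\<^sub>R v) \<noteq> \<infinity>"
    using drop \<epsilon> by (metis enat_ord_simps(6) greaterThanAtMost_iff order_refl)
  then have in_closure: "y + (\<theta> * \<epsilon>) *\<^sub>R v \<in> closure (poly_set l b m)"
    unfolding cnt_def using closure_subset by (auto split: if_splits)
  have ge: "b i \<le> l i y + \<epsilon> * l i (\<theta> *\<^sub>R v)" if i: "i \<in> {1..m}" for i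
  proof -
    have "b i \<le> l i (y + (\<theta> * \<epsilon>) *\<^sub>R v)"
      using closure_poly_set_subset[OF lin, of b] in_closure i by blast
    also have "\<dots> = l i y + \<epsilon> * l i (\<theta> *\<^sub>R v)"
      using lin i by (simp add: linear_add linear_cmul)
    finally show ?thesis .
  qed
  have "0 \<le> l i (\<theta> *\<^sub>R v)" if "i \<in> {1..m}" "l i y = b i" for i
    using ge[OF that(1)] that(2) \<epsilon> by (simp add: zero_le_mult_iff)
  then show ?thesis
    using v \<theta> unfolding weakly_inward_def by blast
qed

lemma weakly_inward_uniform_step:
  assumes lin: "\<forall>j\<in>{1..m}. linear (l j)"
    and y: "y \<in> closure (poly_set l b m)" and v: "weakly_inward l b m y v"
  shows "\<exists>\<delta>>0. \<forall>x\<in>ball y \<delta> \<inter> poly_set l b m. \<forall>t\<in>{0..\<delta>}. x + t *\<^sub>R v \<in> poly_set l b m"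
proof -
  define J where "J = {j\<in>{1..m}. l j v < 0}"
  define U where "U = {z. \<forall>j\<in>J. b j < l j z}"
  have "open U"
    unfolding U_def using lin by (intro open_halfspaces_Inter) (auto simp: J_def)
  moreover have "y \<in> U"
    using closure_poly_set_subset[OF lin] y v
    by (force simp: U_def J_def weakly_inward_def)
  ultimately obtain \<rho> where \<rho>: "\<rho> > 0" "ball y \<rho> \<subseteq> U"
    by (meson open_contains_ball)
  define \<delta> where "\<delta> = \<rho> / (2 * (1 + norm v))"
  have pos: "0 < 1 + norm v"
    by (simp add: add_pos_nonneg)
  have "\<delta> + \<delta> * norm v = \<delta> * (1 + norm v)"
    by (simp add: algebra_simps)
  also have "\<dots> = \<rho> / 2"
    using pos by (simp add: \<delta>_def field_simps)
  finally have "\<delta> + \<delta> * norm v = \<rho> / 2" .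
  moreover have "\<delta> > 0"
    using \<rho>(1) pos by (simp add: \<delta>_def)
  ultimately have \<delta>: "\<delta> > 0" "\<delta> + \<delta> * norm v \<le> \<rho>"
    using \<rho>(1) by linarith+
  have "x + t *\<^sub>R v \<in> poly_set l b m"
    if x: "x \<in> ball y \<delta> \<inter> poly_set l b m" and t: "t \<in> {0..\<delta>}" for x t
  proof -
    have "dist y (x + t *\<^sub>R v) \<le> dist y x + t * norm v"
      using dist_triangle[of y "x + t *\<^sub>R v" x] t by (simp add: dist_norm)
    also have "\<dots> < \<rho>"
      using x t \<delta> mult_right_mono[of t \<delta> "norm v"] by (simp add: dist_commute)
    finally have inU: "x + t *\<^sub>R v \<in> U" using \<rho>(2) by auto
    show ?thesis
      unfolding poly_set_def
    proof (intro CollectI ballI)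
      fix j assume j: "j \<in> {1..m}"
      show "b j < l j (x + t *\<^sub>R v)"
      proof (cases "j \<in> J")
        case True
        then show ?thesis using inU by (simp add: U_def)
      next
        case False
        then have "0 \<le> t * l j v" using t j by (simp add: J_def not_less)
        moreover have "b j < l j x" using x j by (simp add: poly_set_def)
        moreover have "l j (x + t *\<^sub>R v) = l j x + t * l j v"
          using lin j by (simp add: linear_add linear_cmul)
        ultimately show ?thesis by linarith
      qed
    qed
  qed
  with \<delta> show ?thesis by blast
qed

lemma Lebesgue_number_local_balls:
  fixes K :: "'a::euclidean_space set"
  assumes "compact K" and "\<forall>y\<in>K. \<exists>\<delta>>0. Q y \<delta>"
  shows "\<exists>e>0. \<forall>x\<in>K. \<exists>y \<delta>. Q y \<delta> \<and> e \<le> \<delta> \<and> ball x e \<subseteq> ball y \<delta>"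
proof -
  obtain \<delta> where \<delta>: "\<forall>y\<in>K. \<delta> y > 0 \<and> Q y (\<delta> y)"
    using assms(2) by metis
  let ?\<G> = "(\<lambda>y. ball y (\<delta> y)) ` K"
  have "K \<subseteq> \<Union>?\<G>"
    using \<delta> by force
  moreover have "\<And>G. G \<in> ?\<G> \<Longrightarrow> open G"
    by auto
  ultimately obtain e where e: "e > 0" and Lebesgue: "\<And>x. x \<in> K \<Longrightarrow> \<exists>G\<in>?\<G>. ball x e \<subseteq> G"
    using Heine_Borel_lemma[OF assms(1)] by blast
  have "\<exists>y \<delta>'. Q y \<delta>' \<and> e \<le> \<delta>' \<and> ball x e \<subseteq> ball y \<delta>'" if x: "x \<in> K" for x
  proof -
    obtain y where y: "y \<in> K" and sub: "ball x e \<subseteq> ball y (\<delta> y)"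
      using Lebesgue[OF x] by blast
    then have "dist x y + e \<le> \<delta> y"
      using e by (auto simp: ball_subset_ball_iff)
    then have "e \<le> \<delta> y"
      using zero_le_dist[of x y] by linarith
    with y sub \<delta> show ?thesis by blast
  qed
  with e show ?thesis by blast
qed

lemma poly_set_local_incoming_step:
  assumes lin: "\<forall>j\<in>{1..m}. linear (l j)" and "E \<noteq> {}"
    and wi: "weakly_incoming E l b m" and y: "y \<in> closure (poly_set l b m)"
  shows "\<exists>\<delta>>0. \<exists>v\<in>E. \<exists>\<theta>\<in>{-1, 1::real}.
           \<forall>x\<in>ball y \<delta> \<inter> poly_set l b m. \<forall>t\<in>{0..\<delta>}. x + (t * \<theta>) *\<^sub>R v \<in> poly_set l b m"
proof -
  obtain v \<theta> where v: "v \<in> E" "\<theta> \<in> {-1, 1::real}" and inward: "weakly_inward l b m y (\<theta> *\<^sub>R v)"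
  proof (cases "y \<in> poly_set l b m")
    case True
    with \<open>E \<noteq> {}\<close> show ?thesis using that weakly_inward_poly_set by blast
  next
    case False
    with y have "y \<in> frontier (poly_set l b m)"
      by (simp add: frontier_def interior_open open_poly_set[OF lin])
    then show ?thesis using that frontier_weakly_incoming_direction[OF lin wi] by blast
  qed
  obtain \<delta> where \<delta>: "\<delta> > 0"
    and step: "\<forall>x\<in>ball y \<delta> \<inter> poly_set l b m. \<forall>t\<in>{0..\<delta>}. x + t *\<^sub>R (\<theta> *\<^sub>R v) \<in> poly_set l b m"
    using weakly_inward_uniform_step[OF lin y inward] by blast
  from step have "\<forall>x\<in>ball y \<delta> \<inter> poly_set l b m. \<forall>t\<in>{0..\<delta>}. x + (t * \<theta>) *\<^sub>R v \<in> poly_set l b m"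
    by simp
  with \<delta> v show ?thesis by blast
qed

lemma poly_set_uniform_incoming_step:
  assumes lin: "\<forall>j\<in>{1..m}. linear (l j)" and "E \<noteq> {}"
    and wi: "weakly_incoming E l b m" and bdd: "bounded (poly_set l b m)"
  shows "\<exists>r>0. \<forall>x0\<in>closure (poly_set l b m). \<exists>v\<in>E. \<exists>\<theta>\<in>{-1, 1::real}.
           \<forall>x\<in>ball x0 r \<inter> poly_set l b m. \<forall>t\<in>{0..r}. x + (t * \<theta>) *\<^sub>R v \<in> poly_set l b m"
proof -
  let ?\<Omega> = "poly_set l b m"
  have local: "\<forall>y\<in>closure ?\<Omega>. \<exists>\<delta>>0. \<exists>v\<in>E. \<exists>\<theta>\<in>{-1, 1::real}.
      \<forall>x\<in>ball y \<delta> \<inter> ?\<Omega>. \<forall>t\<in>{0..\<delta>}. x + (t * \<theta>) *\<^sub>R v \<in> ?\<Omega>"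
    by (intro ballI poly_set_local_incoming_step[OF lin \<open>E \<noteq> {}\<close> wi])
  have "compact (closure ?\<Omega>)"
    using bdd by (simp add: compact_closure)
  from Lebesgue_number_local_balls[OF this local]
  obtain r where r: "r > 0"
    and cover: "\<forall>x0\<in>closure ?\<Omega>. \<exists>y \<delta>. (\<exists>v\<in>E. \<exists>\<theta>\<in>{-1, 1::real}.
          \<forall>x\<in>ball y \<delta> \<inter> ?\<Omega>. \<forall>t\<in>{0..\<delta>}. x + (t * \<theta>) *\<^sub>R v \<in> ?\<Omega>)
        \<and> r \<le> \<delta> \<and> ball x0 r \<subseteq> ball y \<delta>"
    by blast
  have "\<exists>v\<in>E. \<exists>\<theta>\<in>{-1, 1::real}. \<forall>x\<in>ball x0 r \<inter> ?\<Omega>. \<forall>t\<in>{0..r}. x + (t * \<theta>) *\<^sub>R v \<in> ?\<Omega>"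
    if x0: "x0 \<in> closure ?\<Omega>" for x0
  proof -
    obtain y \<delta> where "r \<le> \<delta>" "ball x0 r \<subseteq> ball y \<delta>"
      and "\<exists>v\<in>E. \<exists>\<theta>\<in>{-1, 1::real}. \<forall>x\<in>ball y \<delta> \<inter> ?\<Omega>. \<forall>t\<in>{0..\<delta>}. x + (t * \<theta>) *\<^sub>R v \<in> ?\<Omega>"
      using cover[rule_format, OF x0] by (elim exE conjE)
    moreover have "{0..r} \<subseteq> {0..\<delta>}"
      using \<open>r \<le> \<delta>\<close> by auto
    ultimately show ?thesis
      by (meson IntE IntI subsetD)
  qed
  with r show ?thesis by blast
qed

theorem corollary1p4:
  fixes l :: "nat \<Rightarrow> 'a::euclidean_space \<Rightarrow> real" and b :: "nat \<Rightarrow> real"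
    and m p :: nat and e :: "nat \<Rightarrow> 'a"
  assumes "DIM('a) \<ge> 2"
    and "\<forall>j\<in>{1..m}. linear (l j)"
    and "poly_set l b m \<noteq> {}"
    and "bounded (poly_set l b m)"
    and "weakly_incoming (e ` {1..p}) l b m"
  shows "\<exists>r>0. \<exists>\<epsilon>>0. \<epsilon> \<le> 1 \<and>
           (\<forall>x0\<in>closure (poly_set l b m). \<exists>q\<in>{1..p}. \<exists>\<theta>\<in>{-1, 1::real}.
              \<forall>x\<in>ball x0 r \<inter> poly_set l b m. \<forall>t\<in>{0..\<epsilon>}.
                 x + (t * \<theta>) *\<^sub>R e q \<in> poly_set l b m)"
proof -
  \<comment> \<open>Weak incomingness is vacuous without boundary
    points; a nonempty bounded open set has some, which forces \<open>p \<ge> 1\<close>.\<close>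
  have "frontier (poly_set l b m) \<noteq> {}"
    using assms(3,4) frontier_not_empty not_bounded_UNIV by metis
  then have "e ` {1..p} \<noteq> {}"
    using assms(5) unfolding weakly_incoming_def by blast
  from poly_set_uniform_incoming_step[OF assms(2) this assms(5,4)]
  obtain r where r: "r > 0" and uniform: "\<forall>x0\<in>closure (poly_set l b m). \<exists>v\<in>e ` {1..p}.
      \<exists>\<theta>\<in>{-1, 1::real}. \<forall>x\<in>ball x0 r \<inter> poly_set l b m. \<forall>t\<in>{0..r}.
        x + (t * \<theta>) *\<^sub>R v \<in> poly_set l b m"
    by blast
  have "\<exists>q\<in>{1..p}. \<exists>\<theta>\<in>{-1, 1::real}. \<forall>x\<in>ball x0 r \<inter> poly_set l b m. \<forall>t\<in>{0..min r 1}.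
      x + (t * \<theta>) *\<^sub>R e q \<in> poly_set l b m" if x0: "x0 \<in> closure (poly_set l b m)" for x0
  proof -
    obtain q \<theta> where "q \<in> {1..p}" "\<theta> \<in> {-1, 1::real}"
      and step: "\<forall>x\<in>ball x0 r \<inter> poly_set l b m. \<forall>t\<in>{0..r}. x + (t * \<theta>) *\<^sub>R e q \<in> poly_set l b m"
      using bex_imageD[OF uniform[rule_format, OF x0]] by blast
    moreover have "{0..min r 1} \<subseteq> {0..r}"
      by auto
    ultimately show ?thesis by blast
  qed
  with r show ?thesis
    by (intro exI[of _ r] exI[of _ "min r 1"] conjI ballI) auto
qed

end
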